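(* Let $c_m$ be an arbitrary finite sequence of complex numbers, and suppose $r|b^{\infty}$, meaning all the prime factors dividing $r$ also divide $b$. Then \begin{equation*} \sum_{x \bmod b} \Big| \sum_{m \geq 1} c_m S(rx, m ;br) \Big|^2 = b r^2 \sum_{\substack{y \bmod b \\ (y,b)=1}} \Big| \sum_{m \equiv 0 \bmod r} c_{m} e\Big(\frac{y m/r}{b}\Big) \Big|^2, \end{equation*} where $S(a,b;c)$ denotes the classical Kloosterman sum and $e(x)=e^{2\pi i x}$. *)

theory Defs
  imports "HOL-Analysis.Analysis" "HOL-Computational_Algebra.Primes"
begin

definition e :: "real \<Rightarrow> complex" where
  "e x = exp (2 * of_real pi * \<i> * of_real x)"

text \<open>Classical Kloosterman sum S(a,n;c) = sum over x mod c with (x,c)=1 of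
  e((a x + n xbar)/c), where x xbar = 1 mod c. Written as a sum over pairs
  (x, xbar) of residues mod c with x * xbar = 1 mod c (xbar is unique).\<close>
definition kloosterman :: "int \<Rightarrow> int \<Rightarrow> nat \<Rightarrow> complex" where
  "kloosterman a n c =
     (\<Sum>p\<in>{(x, xb). x \<in> {0..<int c} \<and> xb \<in> {0..<int c} \<and> (x * xb) mod int c = 1 mod int c}.
        e (real_of_int (a * fst p + n * snd p) / real c))"

end

theory Submission
  imports Defs "HOL-Number_Theory.Cong"
begin

text \<open>Write \<open>S(rx, m; br)\<close> as the sum of \<open>e(xu/b) e(mv/(br))\<close> over the pairs \<open>(u, v)\<close> of
  residues mod \<open>br\<close> with \<open>uv \<equiv> 1\<close>. Expanding the square and summing over \<open>x mod b\<close>,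
  orthogonality keeps only pairs of pairs with \<open>u \<equiv> u' (mod b)\<close>, equivalently \<open>v \<equiv> v' (mod b)\<close>.
  Grouping by the class \<open>y\<close> of \<open>v\<close> mod \<open>b\<close>, each group is a sum of \<open>e(mv/(br))\<close> over the
  units \<open>v\<close> mod \<open>br\<close> lying over \<open>y\<close>. Because every prime factor of \<open>r\<close> divides \<open>b\<close>, these
  are all \<open>r\<close> lifts of \<open>y\<close>, and a second orthogonality relation evaluates the group to
  \<open>r e((m/r) y/b)\<close> if \<open>r | m\<close> and to \<open>0\<close> otherwise.\<close>

lemma e_add: "e (x + y) = e x * e y"
  unfolding e_def by (simp add: distrib_left distrib_right exp_add)

lemma cnj_e: "cnj (e x) = e (- x)"
  unfolding e_def by (simp add: exp_cnj)

lemma e_of_int: "e (of_int k) = 1"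
proof -
  have "2 * of_real pi * \<i> * of_real (of_int k) = complex_of_real (2 * real_of_int k * pi) * \<i>"
    by simp
  then show ?thesis
    unfolding e_def using exp_integer_2pi[of "real_of_int k"] by (simp add: ac_simps)
qed

lemma e_power: "e x ^ n = e (real n * x)"
  unfolding e_def by (simp add: exp_of_nat_mult[symmetric] ac_simps)

lemma e_eq_1_imp_Ints: "e x = 1 \<Longrightarrow> x \<in> \<int>"
proof -
  assume "e x = 1"
  then obtain n :: int where "2 * pi * x = of_int (2 * n) * pi"
    unfolding e_def exp_eq_1 by auto
  then show ?thesis by simp
qed

lemma sum_e_orthogonality:
  assumes "q > 0"
  shows "(\<Sum>x\<in>{0..<int q}. e (real_of_int (x * d) / real q)) = (if int q dvd d then of_nat q else 0)"
proof -
  define z where "z = e (real_of_int d / real q)"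
  have "z ^ q = 1"
    using assms by (simp add: z_def e_power e_of_int)
  moreover have "z = 1 \<longleftrightarrow> int q dvd d"
  proof
    assume "z = 1"
    then obtain k where "real_of_int d / real q = of_int k"
      unfolding z_def by (auto dest: e_eq_1_imp_Ints elim: Ints_cases)
    then have "real_of_int d = of_int (int q * k)"
      using assms by (simp add: field_simps)
    then show "int q dvd d" by (metis dvd_triv_left of_int_eq_iff)
  next
    assume "int q dvd d"
    then obtain k where "d = int q * k" by blast
    then show "z = 1" using assms by (simp add: z_def e_of_int[of k, symmetric])
  qed
  moreover have "(\<Sum>x\<in>{0..<int q}. e (real_of_int (x * d) / real q)) = (\<Sum>x<q. z ^ x)"
  proof -
    have "(\<Sum>x\<in>{0..<int q}. e (real_of_int (x * d) / real q))
        = (\<Sum>x\<in>{0..<q}. e (real_of_int (int x * d) / real q))"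
      by (rule sum.reindex_bij_witness[of _ int nat]) auto
    then show ?thesis by (simp add: z_def e_power atLeast0LessThan)
  qed
  ultimately show ?thesis by (auto simp: sum_gp_strict)
qed

lemma sum_product_cnj_e_orthogonality:
  fixes P :: "(int \<times> int) set" and F G :: "int \<times> int \<Rightarrow> complex"
  assumes "b > 0"
  shows "(\<Sum>x\<in>{0..<int b}. (\<Sum>p\<in>P. e (real_of_int (x * fst p) / real b) * F p)
           * cnj (\<Sum>q\<in>P. e (real_of_int (x * fst q) / real b) * G q))
       = of_nat b * (\<Sum>p\<in>P. \<Sum>q\<in>P. if fst p mod int b = fst q mod int b then F p * cnj (G q) else 0)"
proof -
  have "e (real_of_int (x * fst p) / real b) * cnj (e (real_of_int (x * fst q) / real b))
      = e (real_of_int (x * (fst p - fst q)) / real b)" for x :: int and p q :: "int \<times> int"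
    by (simp add: cnj_e e_add[symmetric] diff_divide_distrib right_diff_distrib)
  then have "(\<Sum>x\<in>{0..<int b}. (\<Sum>p\<in>P. e (real_of_int (x * fst p) / real b) * F p)
           * cnj (\<Sum>q\<in>P. e (real_of_int (x * fst q) / real b) * G q))
      = (\<Sum>x\<in>{0..<int b}. \<Sum>p\<in>P. \<Sum>q\<in>P. e (real_of_int (x * (fst p - fst q)) / real b) * (F p * cnj (G q)))"
    by (simp add: cnj_sum sum_product ac_simps)
  also have "\<dots> = (\<Sum>p\<in>P. \<Sum>q\<in>P. (\<Sum>x\<in>{0..<int b}. e (real_of_int (x * (fst p - fst q)) / real b)) * (F p * cnj (G q)))"
    by (subst sum.swap, rule sum.cong[OF refl], subst sum.swap) (simp add: sum_distrib_right)
  also have "\<dots> = of_nat b * (\<Sum>p\<in>P. \<Sum>q\<in>P. if fst p mod int b = fst q mod int b then F p * cnj (G q) else 0)"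
    unfolding sum_e_orthogonality[OF assms] sum_distrib_left
    by (intro sum.cong refl) (simp add: mod_eq_dvd_iff)
  finally show ?thesis .
qed

lemma residue_class_eq_image:
  fixes b r :: nat and y :: int
  assumes "0 \<le> y" "y < int b"
  shows "{w\<in>{0..<int (b * r)}. w mod int b = y} = (\<lambda>t. y + int b * t) ` {0..<int r}"
proof (intro set_eqI iffI)
  fix w assume w: "w \<in> {w\<in>{0..<int (b * r)}. w mod int b = y}"
  then have "w = y + int b * (w div int b)"
    using mult_div_mod_eq[of "int b" w] by simp
  moreover have "w div int b < int r"
  proof -
    have "w div int b * int b \<le> w"
      using minus_mod_eq_div_mult[of w "int b"] pos_mod_sign[of "int b" w] assms by linarith
    also have "w < int r * int b" using w by (simp add: mult.commute)
    finally show ?thesis by (simp add: mult_less_cancel_right)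
  qed
  moreover have "0 \<le> w div int b"
    using w assms by (simp add: pos_imp_zdiv_nonneg_iff)
  ultimately show "w \<in> (\<lambda>t. y + int b * t) ` {0..<int r}" by force
next
  fix w assume "w \<in> (\<lambda>t. y + int b * t) ` {0..<int r}"
  then obtain t where t: "0 \<le> t" "t < int r" "w = y + int b * t" by auto
  have "int b * t \<le> int b * (int r - 1)"
    using t by (intro mult_left_mono) auto
  then show "w \<in> {w\<in>{0..<int (b * r)}. w mod int b = y}"
    using t assms by (simp add: algebra_simps)
qed

lemma sum_e_residue_class:
  fixes b r :: nat and y m :: int
  assumes "b > 0" "r > 0" "0 \<le> y" "y < int b"
  shows "(\<Sum>w\<in>{w\<in>{0..<int (b * r)}. w mod int b = y}. e (real_of_int (m * w) / real (b * r)))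
       = (if int r dvd m then of_nat r * e (real_of_int (m div int r * y) / real b) else 0)"
proof -
  have "inj_on (\<lambda>t. y + int b * t) {0..<int r}"
    using assms by (auto simp: inj_on_def)
  then have "(\<Sum>w\<in>{w\<in>{0..<int (b * r)}. w mod int b = y}. e (real_of_int (m * w) / real (b * r)))
      = (\<Sum>t\<in>{0..<int r}. e (real_of_int (m * (y + int b * t)) / real (b * r)))"
    by (simp only: residue_class_eq_image[OF assms(3,4)] sum.reindex o_def)
  also have "\<dots> = e (real_of_int (m * y) / real (b * r)) * (\<Sum>t\<in>{0..<int r}. e (real_of_int (t * m) / real r))"
    unfolding sum_distrib_left
    by (intro sum.cong refl) (use assms in \<open>simp add: e_add[symmetric] field_simps\<close>)
  also have "\<dots> = (if int r dvd m then of_nat r * e (real_of_int (m div int r * y) / real b) else 0)"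
    unfolding sum_e_orthogonality[OF assms(2)]
    using assms by (auto simp: field_simps elim!: dvdE)
  finally show ?thesis .
qed

lemma sum_sum_if_same_fibre:
  fixes h :: "'a \<Rightarrow> 'b" and f g :: "'a \<Rightarrow> complex"
  assumes "finite U" "finite V" "h ` U \<subseteq> V"
  shows "(\<Sum>w\<in>U. \<Sum>w'\<in>U. if h w = h w' then f w * g w' else 0)
       = (\<Sum>y\<in>V. (\<Sum>w\<in>{w\<in>U. h w = y}. f w) * (\<Sum>w\<in>{w\<in>U. h w = y}. g w))"
proof -
  define G where "G y = (\<Sum>w\<in>{w\<in>U. h w = y}. g w)" for y
  have "(\<Sum>w'\<in>U. if h w = h w' then f w * g w' else 0) = f w * G (h w)" for w
  proof -
    have "(\<Sum>w'\<in>U. if h w = h w' then f w * g w' else 0) = (\<Sum>w'\<in>{w'\<in>U. h w' = h w}. f w * g w')"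
      using assms(1) by (simp add: sum.inter_filter eq_commute)
    then show ?thesis by (simp add: G_def sum_distrib_left)
  qed
  then have "(\<Sum>w\<in>U. \<Sum>w'\<in>U. if h w = h w' then f w * g w' else 0) = (\<Sum>w\<in>U. f w * G (h w))"
    by simp
  also have "\<dots> = (\<Sum>y\<in>V. \<Sum>w\<in>{w\<in>U. h w = y}. f w * G y)"
    using sum.group[OF assms, of "\<lambda>w. f w * G (h w)"] by simp
  finally show ?thesis by (simp add: G_def sum_distrib_right)
qed

lemma cong_inverse_unique:
  fixes a a' c c' n :: int
  assumes "[a * a' = 1] (mod n)" "[c * c' = 1] (mod n)" "[a = c] (mod n)"
  shows "[a' = c'] (mod n)"
proof -
  have "coprime a n"
    using assms(1) coprime_iff_invertible_int by blast
  moreover have "[a * c' = a * a'] (mod n)"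
    using cong_trans[OF cong_scalar_right[OF assms(3)] cong_trans[OF assms(2) cong_sym[OF assms(1)]]] .
  ultimately show ?thesis by (metis cong_mult_lcancel cong_sym)
qed

lemma coprime_if_prime_divisors_dvd:
  fixes w :: int and b r :: nat
  assumes "r > 0" "\<forall>p. prime p \<and> p dvd r \<longrightarrow> p dvd b" "coprime w (int b)"
  shows "coprime w (int r)"
proof (rule coprimeI)
  fix d assume d: "d dvd w" "d dvd int r"
  show "is_unit d"
  proof (rule ccontr)
    assume "\<not> is_unit d"
    moreover have "d \<noteq> 0" using d assms(1) by auto
    ultimately obtain p :: int where p: "prime p" "p dvd d"
      using prime_divisor_exists by blast
    then have "nat p dvd r" using d
      by (metis dvd_trans int_dvd_int_iff nonneg_int_cases prime_ge_0_int nat_int)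
    then have "p dvd int b" using assms(2) p(1)
      by (metis int_dvd_int_iff prime_ge_0_int prime_nat_int_transfer int_nat_eq)
    then show False using p d assms(3)
      by (meson coprime_common_divisor dvd_trans not_prime_unit)
  qed
qed

lemma units_in_residue_class_eq_residue_class:
  fixes b r :: nat and y :: int
  assumes "b > 0" "r > 0" "\<forall>p. prime p \<and> p dvd r \<longrightarrow> p dvd b" "coprime y (int b)"
  shows "{w\<in>{w\<in>{0..<int (b * r)}. coprime w (int (b * r))}. w mod int b = y}
       = {w\<in>{0..<int (b * r)}. w mod int b = y}"
proof -
  have "coprime w (int (b * r))" if "w mod int b = y" for w
    using that assms coprime_if_prime_divisors_dvd[OF assms(2,3), of w] by auto
  then show ?thesis by blast
qed

definition inverse_pairs :: "int \<Rightarrow> (int \<times> int) set" where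
  "inverse_pairs N = {(x, xb). x \<in> {0..<N} \<and> xb \<in> {0..<N} \<and> (x * xb) mod N = 1 mod N}"

lemma inverse_pairs_cong: "p \<in> inverse_pairs N \<Longrightarrow> [fst p * snd p = 1] (mod N)"
  by (auto simp: inverse_pairs_def cong_def)

lemma inverse_pairs_fst_cong_iff_snd_cong:
  assumes "p \<in> inverse_pairs N" "q \<in> inverse_pairs N" "b dvd N"
  shows "fst p mod b = fst q mod b \<longleftrightarrow> snd p mod b = snd q mod b"
proof -
  have "[fst p * snd p = 1] (mod b)" "[fst q * snd q = 1] (mod b)"
    using assms inverse_pairs_cong cong_dvd_mono_modulus by blast+
  then show ?thesis
    using cong_inverse_unique[of "fst p" "snd p" b "fst q" "snd q"]
      cong_inverse_unique[of "snd p" "fst p" b "snd q" "fst q"]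
    by (auto simp: cong_def mult.commute)
qed

lemma inj_on_snd_inverse_pairs: "inj_on snd (inverse_pairs N)"
proof (rule inj_onI)
  fix p q assume pq: "p \<in> inverse_pairs N" "q \<in> inverse_pairs N" "snd p = snd q"
  have "[snd p * fst p = 1] (mod N)" "[snd q * fst q = 1] (mod N)"
    using inverse_pairs_cong[OF pq(1)] inverse_pairs_cong[OF pq(2)] by (simp_all add: mult.commute)
  then have "[fst p = fst q] (mod N)"
    using pq(3) by (simp add: cong_inverse_unique)
  moreover have "fst p \<in> {0..<N}" "fst q \<in> {0..<N}"
    using pq by (auto simp: inverse_pairs_def)
  ultimately show "p = q"
    using pq(3) by (simp add: cong_def prod_eq_iff)
qed

lemma snd_image_inverse_pairs: "snd ` inverse_pairs N = {w\<in>{0..<N}. coprime w N}"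
proof (intro set_eqI iffI)
  fix w assume "w \<in> snd ` inverse_pairs N"
  then obtain p where p: "p \<in> inverse_pairs N" "w = snd p" by auto
  then have "[w * fst p = 1] (mod N)"
    using inverse_pairs_cong by (simp add: mult.commute)
  then show "w \<in> {w\<in>{0..<N}. coprime w N}"
    using p coprime_iff_invertible_int by (auto simp: inverse_pairs_def)
next
  fix w assume w: "w \<in> {w\<in>{0..<N}. coprime w N}"
  then obtain x where "[w * x = 1] (mod N)"
    using coprime_iff_invertible_int by blast
  then have "(x mod N, w) \<in> inverse_pairs N"
    using w unfolding inverse_pairs_def cong_def by (auto simp: mod_mult_right_eq mult.commute)
  then show "w \<in> snd ` inverse_pairs N" by force
qed

lemma kloosterman_eq_sum_inverse_pairs:
  assumes "b > 0" "r > 0"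
  shows "kloosterman (int r * x) m (b * r) = (\<Sum>p\<in>inverse_pairs (int (b * r)).
           e (real_of_int (x * fst p) / real b) * e (real_of_int (m * snd p) / real (b * r)))"
  unfolding kloosterman_def inverse_pairs_def
  using assms by (intro sum.cong refl) (simp add: e_add[symmetric] field_simps)

lemma sum_kloosterman_mult_cnj:
  fixes b r :: nat and m m' :: int
  assumes "b > 0" "r > 0" "\<forall>p. prime p \<and> p dvd r \<longrightarrow> p dvd b"
  defines "A k y \<equiv> \<Sum>w\<in>{w\<in>{0..<int (b * r)}. w mod int b = y}. e (real_of_int (k * w) / real (b * r))"
  shows "(\<Sum>x\<in>{0..<int b}. kloosterman (int r * x) m (b * r) * cnj (kloosterman (int r * x) m' (b * r)))
    = of_nat b * (\<Sum>y\<in>{y\<in>{0..<int b}. coprime y (int b)}. A m y * cnj (A m' y))"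
proof -
  define N where "N = int (b * r)"
  define P where "P = inverse_pairs N"
  define U where "U = {w\<in>{0..<N}. coprime w N}"
  define Ub where "Ub = {y\<in>{0..<int b}. coprime y (int b)}"
  define F where "F k w = e (real_of_int (k * w) / real (b * r))" for k w :: int
  have sum_U: "sum g U = (\<Sum>p\<in>P. g (snd p))" for g :: "int \<Rightarrow> complex"
    unfolding U_def P_def snd_image_inverse_pairs[symmetric]
    by (simp add: sum.reindex[OF inj_on_snd_inverse_pairs])
  have "(\<Sum>x\<in>{0..<int b}. kloosterman (int r * x) m (b * r) * cnj (kloosterman (int r * x) m' (b * r)))
      = of_nat b * (\<Sum>p\<in>P. \<Sum>q\<in>P.
          if fst p mod int b = fst q mod int b then F m (snd p) * cnj (F m' (snd q)) else 0)"
    unfolding kloosterman_eq_sum_inverse_pairs[OF assms(1,2)] P_def N_def F_def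
    by (rule sum_product_cnj_e_orthogonality[OF assms(1)])
  also have "(\<Sum>p\<in>P. \<Sum>q\<in>P. if fst p mod int b = fst q mod int b then F m (snd p) * cnj (F m' (snd q)) else 0)
      = (\<Sum>w\<in>U. \<Sum>w'\<in>U. if w mod int b = w' mod int b then F m w * cnj (F m' w') else 0)"
    using inverse_pairs_fst_cong_iff_snd_cong[where N = N and b = "int b"]
    by (simp add: sum_U P_def N_def cong: if_cong)
  also have "\<dots> = (\<Sum>y\<in>Ub. (\<Sum>w\<in>{w\<in>U. w mod int b = y}. F m w) * (\<Sum>w\<in>{w\<in>U. w mod int b = y}. cnj (F m' w)))"
  proof (rule sum_sum_if_same_fibre)
    show "finite U" "finite Ub"
      by (auto simp: U_def Ub_def intro: finite_subset[of _ "{0..<N}"] finite_subset[of _ "{0..<int b}"])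
    show "(\<lambda>w. w mod int b) ` U \<subseteq> Ub"
      using assms(1) by (auto simp: U_def Ub_def N_def)
  qed
  also have "\<dots> = (\<Sum>y\<in>Ub. A m y * cnj (A m' y))"
    using units_in_residue_class_eq_residue_class[OF assms(1-3)]
    by (intro sum.cong refl) (simp add: U_def Ub_def N_def A_def F_def)
  finally show ?thesis by (simp add: Ub_def)
qed

lemma sum_mult_sum_e_residue_class:
  fixes b r :: nat and y :: int and c :: "nat \<Rightarrow> complex"
  assumes "finite I" "b > 0" "r > 0" "0 \<le> y" "y < int b"
  shows "(\<Sum>m\<in>I. c m * (\<Sum>w\<in>{w\<in>{0..<int (b * r)}. w mod int b = y}.
            e (real_of_int (int m * w) / real (b * r))))
       = of_nat r * (\<Sum>m\<in>{m\<in>I. r dvd m}. c m * e (real_of_int (y * int (m div r)) / real b))"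
proof -
  have "(\<Sum>w\<in>{w\<in>{0..<int (b * r)}. w mod int b = y}. e (real_of_int (int m * w) / real (b * r)))
      = (if r dvd m then of_nat r * e (real_of_int (y * int (m div r)) / real b) else 0)" for m
    using sum_e_residue_class[OF assms(2-5), of "int m"] by (simp add: zdiv_int mult.commute)
  then have "(\<Sum>m\<in>I. c m * (\<Sum>w\<in>{w\<in>{0..<int (b * r)}. w mod int b = y}.
            e (real_of_int (int m * w) / real (b * r))))
      = (\<Sum>m\<in>I. if r dvd m then of_nat r * (c m * e (real_of_int (y * int (m div r)) / real b)) else 0)"
    by (intro sum.cong refl) simp
  also have "\<dots> = (\<Sum>m\<in>{m\<in>I. r dvd m}. of_nat r * (c m * e (real_of_int (y * int (m div r)) / real b)))"
    using assms(1) by (rule sum.inter_filter[symmetric])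
  finally show ?thesis by (simp add: sum_distrib_left)
qed

lemma of_real_sum_cmod_square_linear_combination:
  fixes c :: "'i \<Rightarrow> complex" and f :: "'i \<Rightarrow> 'x \<Rightarrow> complex"
  shows "complex_of_real (\<Sum>x\<in>X. (cmod (\<Sum>i\<in>I. c i * f i x))\<^sup>2)
       = (\<Sum>i\<in>I. \<Sum>j\<in>I. c i * cnj (c j) * (\<Sum>x\<in>X. f i x * cnj (f j x)))"
proof -
  have "complex_of_real (\<Sum>x\<in>X. (cmod (\<Sum>i\<in>I. c i * f i x))\<^sup>2)
      = (\<Sum>x\<in>X. \<Sum>i\<in>I. \<Sum>j\<in>I. c i * cnj (c j) * (f i x * cnj (f j x)))"
    by (simp only: of_real_sum complex_norm_square) (simp add: cnj_sum sum_product ac_simps)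
  also have "\<dots> = (\<Sum>i\<in>I. \<Sum>j\<in>I. c i * cnj (c j) * (\<Sum>x\<in>X. f i x * cnj (f j x)))"
    by (subst sum.swap, rule sum.cong[OF refl], subst sum.swap) (simp add: sum_distrib_left)
  finally show ?thesis .
qed

theorem lemma11p2:
  fixes b r M :: nat and c :: "nat \<Rightarrow> complex"
  assumes "b > 0" and "r > 0"
    and "\<forall>p. prime p \<and> p dvd r \<longrightarrow> p dvd b"
  shows "(\<Sum>x\<in>{0..<int b}.
            (cmod (\<Sum>m\<in>{1..M}. c m * kloosterman (int r * x) (int m) (b * r)))\<^sup>2)
       = real b * (real r)\<^sup>2 *
         (\<Sum>y\<in>{y\<in>{0..<int b}. coprime y (int b)}.
            (cmod (\<Sum>m\<in>{m\<in>{1..M}. r dvd m}.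
                c m * e (real_of_int (y * int (m div r)) / real b)))\<^sup>2)"
proof -
  define Ub where "Ub = {y\<in>{0..<int b}. coprime y (int b)}"
  define K where "K m x = kloosterman (int r * x) (int m) (b * r)" for m :: nat and x :: int
  define A where "A m y = (\<Sum>w\<in>{w\<in>{0..<int (b * r)}. w mod int b = y}.
      e (real_of_int (int m * w) / real (b * r)))" for m :: nat and y :: int
  define E where "E m y = e (real_of_int (y * int (m div r)) / real b)" for m :: nat and y :: int
  have gram: "(\<Sum>x\<in>{0..<int b}. K m x * cnj (K m' x)) = of_nat b * (\<Sum>y\<in>Ub. A m y * cnj (A m' y))"
    for m m' unfolding K_def A_def Ub_def by (rule sum_kloosterman_mult_cnj[OF assms])
  have collapse: "(\<Sum>m\<in>{1..M}. c m * A m y) = of_nat r * (\<Sum>m\<in>{m\<in>{1..M}. r dvd m}. c m * E m y)"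
    if "y \<in> Ub" for y
    unfolding A_def E_def
    by (rule sum_mult_sum_e_residue_class) (use that assms(1,2) in \<open>auto simp: Ub_def\<close>)
  have reduced: "(\<Sum>y\<in>Ub. (cmod (\<Sum>m\<in>{1..M}. c m * A m y))\<^sup>2)
      = (real r)\<^sup>2 * (\<Sum>y\<in>Ub. (cmod (\<Sum>m\<in>{m\<in>{1..M}. r dvd m}. c m * E m y))\<^sup>2)"
    by (simp only: collapse cong: sum.cong) (simp add: norm_mult power_mult_distrib flip: sum_distrib_left)
  have "complex_of_real (\<Sum>x\<in>{0..<int b}. (cmod (\<Sum>m\<in>{1..M}. c m * K m x))\<^sup>2)
      = of_nat b * (\<Sum>m\<in>{1..M}. \<Sum>m'\<in>{1..M}. c m * cnj (c m') * (\<Sum>y\<in>Ub. A m y * cnj (A m' y)))"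
    unfolding of_real_sum_cmod_square_linear_combination gram by (simp add: sum_distrib_left ac_simps)
  also have "\<dots> = of_nat b * complex_of_real (\<Sum>y\<in>Ub. (cmod (\<Sum>m\<in>{1..M}. c m * A m y))\<^sup>2)"
    by (simp only: of_real_sum_cmod_square_linear_combination)
  also have "\<dots> = complex_of_real (real b * (real r)\<^sup>2 *
      (\<Sum>y\<in>Ub. (cmod (\<Sum>m\<in>{m\<in>{1..M}. r dvd m}. c m * E m y))\<^sup>2))"
    unfolding reduced by simp
  finally show ?thesis
    unfolding K_def E_def Ub_def of_real_eq_iff .
qed

end
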